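(* For $0<\mu<1$ and $x\in\mathbb T^2$ let $K^+(x)=\{v=(v_1,v_2)\in\mathbb R^2:|v_2|<\mu|v_1|\}$ and $K^-(x)=\{v=(v_1,v_2):|v_1|<\mu|v_2|\}$ (tangent vectors written in the coordinates given by the eigendirections of $A$). There exists $0<\mu_0<1$ such that for all $\mu_0<\mu<1$ and all $x\in\mathbb T^2$, $$DG\,K^+(x)\subseteq K^+(G(x)),\qquad (DG)^{-1}K^-(G(x))\subseteq K^-(x).$$
   Context: Let $A=\begin{pmatrix}2&1\\1&1\end{pmatrix}$ on $\mathbb T^2$, $\lambda>1$ its largest eigenvalue, $(s_1,s_2)$ eigen-coordinates ($s_1$ expanding, $s_2$ contracting). Fix $0<\alpha<1$, $0<r_0<1$ and $\psi:[0,1]\to[0,1]$, $C^\infty$ except at $0$, with $\psi=1$ on $[r_0,1]$, $\psi'>0$ and decreasing on $(0,r_0)$, and $\psi(u)=(u/r_0)^\alpha$ for $0\le u\le r_0/2$. Let $D_r=\{s_1^2+s_2^2\le r\}$ (with $D_{r_0}\subset\mathrm{Int}\,A(D_{r_1})\cap\mathrm{Int}\,A^{-1}(D_{r_1})$, $r_1=2r_0\log\lambda$). $G$ is the homeomorphism of $\mathbb T^2$ equal to $A$ outside $D_{r_0}$ and, on $D_{r_0}$, to the time-one map of the flow $\dot s_1=s_1\psi(s_1^2+s_2^2)\log\lambda$, $\dot s_2=-s_2\psi(s_1^2+s_2^2)\log\lambda$. *)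

theory Defs
  imports "HOL-Analysis.Analysis"
begin

text \<open>Points of the torus T^2 = R^2/Z^2 are represented by lifts
  p :: real \<times> real in the standard coordinates; the lattice is Z \<times> Z.
  Eigen-coordinates (s1, s2) are orthonormal coordinates along the unit
  eigenvectors e1 (eigenvalue lam, expanding) and e2 (eigenvalue 1/lam, contracting)
  of A = [[2,1],[1,1]].\<close>

definition lam :: real where
  "lam = (3 + sqrt 5) / 2"

definition eig_norm :: real where
  "eig_norm = sqrt (1 + (lam - 2)^2)"

definition e1 :: "real \<times> real" where
  "e1 = (1 / eig_norm, (lam - 2) / eig_norm)"

definition e2 :: "real \<times> real" where
  "e2 = ((2 - lam) / eig_norm, 1 / eig_norm)"

definition Amap :: "real \<times> real \<Rightarrow> real \<times> real" where
  "Amap p = (2 * fst p + snd p, fst p + snd p)"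

definition ec :: "real \<times> real \<Rightarrow> real \<times> real" where
  "ec p = (p \<bullet> e1, p \<bullet> e2)"

definition int_lattice :: "(real \<times> real) set" where
  "int_lattice = {(of_int a, of_int b) | a b. True}"

definition Aeig :: "real \<times> real \<Rightarrow> real \<times> real" where
  "Aeig s = (lam * fst s, snd s / lam)"

definition in_disk :: "real \<Rightarrow> real \<times> real \<Rightarrow> bool" where
  "in_disk r p \<longleftrightarrow> (\<exists>n\<in>int_lattice. (fst (ec (p - n)))^2 + (snd (ec (p - n)))^2 \<le> r)"

text \<open>psi is only given on [0,1]; it is extended by 1 beyond 1 (it equals 1 on [r0,1]).\<close>
definition psi_ext :: "(real \<Rightarrow> real) \<Rightarrow> real \<Rightarrow> real" where
  "psi_ext psi u = (if u \<le> 1 then psi u else 1)"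

definition vfield :: "(real \<Rightarrow> real) \<Rightarrow> real \<times> real \<Rightarrow> real \<times> real" where
  "vfield psi s =
     (fst s * psi_ext psi ((fst s)^2 + (snd s)^2) * ln lam,
      - snd s * psi_ext psi ((fst s)^2 + (snd s)^2) * ln lam)"

definition flow1 :: "(real \<Rightarrow> real) \<Rightarrow> real \<times> real \<Rightarrow> real \<times> real" where
  "flow1 psi s =
     (THE y. y 0 = s \<and> (\<forall>t. (y has_vector_derivative vfield psi (y t)) (at t))) 1"

text \<open>DG_at psi r0 p L: L is the derivative DG(x) of G at the point x of T^2 with lift p,
  expressed in eigen-coordinates (tangent vectors at x and at G(x) both written in
  the eigen-coordinates).  On D_{r0}, G is the time-one map of the flow (read in the
  local eigen-coordinate chart s = ec (p - n) centred at the lattice point n);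
  outside D_{r0}, G = A, whose derivative in eigen-coordinates is diag(lam, 1/lam).\<close>
definition DG_at :: "(real \<Rightarrow> real) \<Rightarrow> real \<Rightarrow> real \<times> real \<Rightarrow> (real \<times> real \<Rightarrow> real \<times> real) \<Rightarrow> bool" where
  "DG_at psi r0 p L \<longleftrightarrow>
     (\<exists>n\<in>int_lattice. (fst (ec (p - n)))^2 + (snd (ec (p - n)))^2 \<le> r0 \<and>
        (flow1 psi has_derivative L) (at (ec (p - n))))
     \<or> (\<not> in_disk r0 p \<and> L = Aeig)"

text \<open>The cones (the same set at every point, in eigen-coordinates).\<close>
definition Kplus :: "real \<Rightarrow> (real \<times> real) set" where
  "Kplus \<mu> = {v. \<bar>snd v\<bar> < \<mu> * \<bar>fst v\<bar>}"

definition Kminus :: "real \<Rightarrow> (real \<times> real) set" where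
  "Kminus \<mu> = {v. \<bar>fst v\<bar> < \<mu> * \<bar>snd v\<bar>}"

end

theory Submission
  imports Defs
begin

text \<open>On \<open>D\<^sub>r\<^sub>0\<close> the map \<open>G\<close> is the time-one map of the flow of
  \<open>X(s) = log \<lambda> \<psi>(|s|\<^sup>2) (s\<^sub>1, -s\<^sub>2)\<close>. For \<open>c > 0\<close> with \<open>1 + c\<^sup>2 \<le> 3c\<close>, the quadratic form
  \<open>Q\<^sub>c(w) = c\<^sup>2 w\<^sub>1\<^sup>2 - w\<^sub>2\<^sup>2\<close> of the difference \<open>w\<close> of two flow lines is nondecreasing in time:
  its derivative is an increment of \<open>x \<mapsto> (p\<cdot>x) \<psi>(|x|\<^sup>2)\<close> along a segment, and the directional
  derivatives of that function are nonnegative because \<open>u \<psi>'(u) \<le> \<psi>(u)\<close> (\<open>\<psi>'\<close> is decreasing and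
  \<open>\<psi> \<ge> 0\<close>) and \<open>(1 - c)\<^sup>2 \<le> c\<close>. Differentiating in the initial point gives \<open>Q\<^sub>c(DG v) \<ge> Q\<^sub>c(v)\<close>,
  which holds trivially for \<open>DA = diag(\<lambda>, 1/\<lambda>)\<close> as well. As \<open>K\<^sup>+(\<mu>) = {Q\<^sub>\<mu> > 0}\<close>, the complement of
  \<open>K\<^sup>-(\<mu>)\<close> is \<open>{Q\<^sub>1\<^sub>/\<^sub>\<mu> \<ge> 0}\<close>, and both \<open>\<mu>\<close> and \<open>1/\<mu>\<close> satisfy \<open>1 + c\<^sup>2 \<le> 3c\<close> when
  \<open>1/2 < \<mu> < 1\<close>, one can take \<open>\<mu>\<^sub>0 = 1/2\<close>. The time-one map is the intended one because flow
  lines exist (reparametrised hyperbolas \<open>s\<^sub>1 s\<^sub>2 = const\<close>) and are unique (Gronwall).\<close>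

section \<open>Facts from real analysis\<close>

lemma DERIV_nonneg_imp_le_except_point:
  fixes f :: "real \<Rightarrow> real"
  assumes "a \<le> b" and cont: "continuous_on {a..b} f"
    and der: "\<And>x. a < x \<Longrightarrow> x < b \<Longrightarrow> x \<noteq> c \<Longrightarrow> \<exists>y. DERIV f x :> y \<and> 0 \<le> y"
  shows "f a \<le> f b"
proof (cases "a < c \<and> c < b")
  case True
  have "f a \<le> f c"
    by (rule DERIV_nonneg_imp_increasing_open) (use True der in \<open>auto intro: continuous_on_subset[OF cont]\<close>)
  also have "f c \<le> f b"
    by (rule DERIV_nonneg_imp_increasing_open) (use True der in \<open>auto intro: continuous_on_subset[OF cont]\<close>)
  finally show ?thesis .
next
  case False
  show ?thesis
    by (rule DERIV_nonneg_imp_increasing_open) (use False der assms in auto)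
qed

lemma DERIV_abs_le_mult_imp_eq_0:
  fixes N :: "real \<Rightarrow> real"
  assumes der: "\<And>t. \<exists>N'. (N has_real_derivative N') (at t) \<and> \<bar>N'\<bar> \<le> k * N t"
    and "N 0 = 0" and nonneg: "\<And>t. 0 \<le> N t"
  shows "N t = 0"
proof -
  have "exp (- (k * t)) * N t \<le> 0" if "0 \<le> t"
  proof -
    have "exp (- (k * t)) * N t \<le> exp (- (k * 0)) * N 0"
    proof (rule DERIV_nonpos_imp_nonincreasing[OF that])
      fix x
      obtain N' where N': "(N has_real_derivative N') (at x)" "\<bar>N'\<bar> \<le> k * N x" using der by blast
      have "((\<lambda>t. exp (- (k * t)) * N t) has_real_derivative exp (- (k * x)) * (N' - k * N x)) (at x)"
        by (auto intro!: derivative_eq_intros N'(1) simp: algebra_simps)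
      moreover have "exp (- (k * x)) * (N' - k * N x) \<le> 0"
        using N'(2) by (intro mult_nonneg_nonpos) auto
      ultimately show "\<exists>y. ((\<lambda>t. exp (- (k * t)) * N t) has_real_derivative y) (at x) \<and> y \<le> 0"
        by blast
    qed
    then show ?thesis using \<open>N 0 = 0\<close> by simp
  qed
  moreover have "exp (k * t) * N t \<le> 0" if "t \<le> 0"
  proof -
    have "exp (k * t) * N t \<le> exp (k * 0) * N 0"
    proof (rule DERIV_nonneg_imp_nondecreasing[OF that])
      fix x
      obtain N' where N': "(N has_real_derivative N') (at x)" "\<bar>N'\<bar> \<le> k * N x" using der by blast
      have "((\<lambda>t. exp (k * t) * N t) has_real_derivative exp (k * x) * (N' + k * N x)) (at x)"
        by (auto intro!: derivative_eq_intros N'(1) simp: algebra_simps)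
      moreover have "0 \<le> exp (k * x) * (N' + k * N x)"
        using N'(2) by (intro mult_nonneg_nonneg) auto
      ultimately show "\<exists>y. ((\<lambda>t. exp (k * t) * N t) has_real_derivative y) (at x) \<and> 0 \<le> y"
        by blast
    qed
    then show ?thesis using \<open>N 0 = 0\<close> by simp
  qed
  ultimately show ?thesis
    using nonneg[of t] by (cases "0 \<le> t") (auto simp: mult_le_0_iff)
qed

lemma DERIV_ge_pos_imp_strict_mono_surj:
  fixes F F' :: "real \<Rightarrow> real"
  assumes der: "\<And>\<sigma>. (F has_real_derivative F' \<sigma>) (at \<sigma>)" and ge: "\<And>\<sigma>. m \<le> F' \<sigma>" and "0 < m"
  shows "strict_mono F" and "surj F"
proof -
  have growth: "m * (y - x) \<le> F y - F x" if "x \<le> y" for x y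
  proof -
    have "F x - m * x \<le> F y - m * y"
    proof (rule DERIV_nonneg_imp_nondecreasing[OF that])
      fix z
      have "((\<lambda>x. F x - m * x) has_real_derivative F' z - m) (at z)"
        by (auto intro!: derivative_eq_intros der)
      then show "\<exists>d. ((\<lambda>x. F x - m * x) has_real_derivative d) (at z) \<and> 0 \<le> d"
        using ge[of z] by force
    qed
    then show ?thesis by (simp add: algebra_simps)
  qed
  show "strict_mono F"
  proof (rule strict_monoI)
    fix x y :: real assume "x < y"
    then have "0 < m * (y - x)" using \<open>0 < m\<close> by simp
    with growth[of x y] \<open>x < y\<close> show "F x < F y" by simp
  qed
  show "surj F" unfolding surj_def
  proof
    fix t
    define R where "R = \<bar>F 0 - t\<bar> / m"
    have R: "0 \<le> R" unfolding R_def using \<open>0 < m\<close> by simp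
    have "F (- R) \<le> t" "t \<le> F R"
      using growth[of "- R" 0] growth[of 0 R] R \<open>0 < m\<close> unfolding R_def by auto
    moreover have "\<forall>\<sigma>. - R \<le> \<sigma> \<and> \<sigma> \<le> R \<longrightarrow> isCont F \<sigma>"
      using der DERIV_isCont by blast
    ultimately show "\<exists>\<sigma>. t = F \<sigma>"
      using IVT[of F "- R" t R] R by auto
  qed
qed

lemma autonomous_ode_solution_exists:
  fixes G :: "real \<Rightarrow> real"
  assumes cont: "\<And>\<sigma>. isCont G \<sigma>" and pos: "\<And>\<sigma>. 0 < G \<sigma>" and bounded: "\<And>\<sigma>. G \<sigma> \<le> M"
  obtains \<tau> where "\<tau> 0 = 0" "\<And>t. (\<tau> has_real_derivative G (\<tau> t)) (at t)"
proof -
  obtain F where "\<And>\<sigma>::real. (F has_vector_derivative 1 / G \<sigma>) (at \<sigma>)"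
    using einterval_antiderivative[of "-\<infinity>" "\<infinity>" "\<lambda>\<sigma>. 1 / G \<sigma>"] cont pos
    by (fastforce intro!: continuous_intros simp: less_imp_neq[symmetric])
  then have F: "(F has_real_derivative 1 / G \<sigma>) (at \<sigma>)" for \<sigma>
    by (simp add: has_real_derivative_iff_has_vector_derivative)
  \<comment> \<open>the time \<open>F\<close> needed to reach \<open>\<sigma>\<close> is a bijection of \<open>\<real>\<close>; its inverse is the solution\<close>
  have "1 / M \<le> 1 / G \<sigma>" for \<sigma> using pos[of \<sigma>] bounded[of \<sigma>] by (simp add: frac_le)
  moreover have "0 < 1 / M" using pos[of 0] bounded[of 0] by simp
  ultimately have mono: "strict_mono F" and "surj F"
    using DERIV_ge_pos_imp_strict_mono_surj[OF F] by blast+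
  define \<tau> where "\<tau> t = inv F (t + F 0)" for t
  have F\<tau>: "F (\<tau> t) = t + F 0" for t unfolding \<tau>_def by (rule surj_f_inv_f[OF \<open>surj F\<close>])
  have \<tau>F: "\<tau> (F \<sigma> - F 0) = \<sigma>" for \<sigma>
    unfolding \<tau>_def using strict_mono_imp_inj_on[OF mono] by (simp add: inv_f_f)
  show ?thesis
  proof
    show "\<tau> 0 = 0" using \<tau>F[of 0] by simp
  next
    fix t
    have "isCont \<tau> (F (\<tau> t) - F 0)"
      by (rule isCont_inverse_function[where f = "\<lambda>\<sigma>. F \<sigma> - F 0" and d = 1])
         (auto intro!: continuous_intros DERIV_isCont[OF F] simp: \<tau>F)
    then have "isCont \<tau> t" by (simp add: F\<tau>)
    then have "(\<tau> has_real_derivative inverse (1 / G (\<tau> t))) (at t)"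
      by (intro DERIV_inverse_function[where f = "\<lambda>\<sigma>. F \<sigma> - F 0" and a = "t - 1" and b = "t + 1"])
         (auto intro!: derivative_eq_intros F simp: F\<tau> less_imp_neq[OF pos, symmetric])
    then show "(\<tau> has_real_derivative G (\<tau> t)) (at t)" by simp
  qed
qed

lemma mult_deriv_le_of_antimono_deriv:
  fixes f :: "real \<Rightarrow> real"
  assumes u: "0 < u" "u < r"
    and der: "\<And>x. 0 < x \<Longrightarrow> x < r \<Longrightarrow> (f has_real_derivative deriv f x) (at x)"
    and antimono: "\<And>x y. 0 < x \<Longrightarrow> x \<le> y \<Longrightarrow> y < r \<Longrightarrow> deriv f y \<le> deriv f x"
    and nonneg: "\<And>x. 0 < x \<Longrightarrow> x < r \<Longrightarrow> 0 \<le> f x"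
  shows "u * deriv f u \<le> f u"
proof (rule tendsto_upperbound)
  show "((\<lambda>\<epsilon>. (u - \<epsilon>) * deriv f u) \<longlongrightarrow> u * deriv f u) (at_right 0)"
    by (auto intro!: tendsto_eq_intros)
  show "\<forall>\<^sub>F \<epsilon> in at_right 0. (u - \<epsilon>) * deriv f u \<le> f u"
    unfolding eventually_at_right_field
  proof (intro exI conjI allI impI)
    fix \<epsilon> :: real assume \<epsilon>: "0 < \<epsilon>" "\<epsilon> < u"
    obtain z where z: "\<epsilon> < z" "z < u" "f u - f \<epsilon> = (u - \<epsilon>) * deriv f z"
      using MVT2[of \<epsilon> u f "deriv f"] der \<epsilon> u by auto
    have "(u - \<epsilon>) * deriv f u \<le> (u - \<epsilon>) * deriv f z"
      using antimono[of z u] \<epsilon> z u by (intro mult_left_mono) auto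
    also have "\<dots> \<le> f u" using z nonneg[of \<epsilon>] \<epsilon> u by simp
    finally show "(u - \<epsilon>) * deriv f u \<le> f u" .
  qed (use u in simp)
qed simp

text \<open>The pointwise form of the cone inequality: \<open>F\<close> and \<open>P\<close> stand for \<open>\<psi>(u)\<close> and
  \<open>\<psi>'(u)\<close>, and the condition \<open>1 + c\<^sup>2 \<le> 3c\<close> means \<open>(1 - c)\<^sup>2 \<le> c\<close>.\<close>
lemma cone_form_rate_nonneg:
  fixes c F P u x1 x2 d1 d2 :: real
  assumes c: "0 < c" "1 + c^2 \<le> 3*c" and P: "0 \<le> P" and F: "u*P \<le> F" and u: "u = x1^2 + x2^2"
  shows "0 \<le> (c^2*d1*d1 + d2*d2) * F + 2*(c^2*d1*x1 + d2*x2)*(x1*d1 + x2*d2) * P"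
proof -
  define a where "a = c*x1*d1"
  define b where "b = x2*d2"
  define W where "W = c^2*d1^2 + d2^2"
  define X where "X = (c^2*d1*x1 + d2*x2)*(x1*d1 + x2*d2)"
  have W0: "0 \<le> W" unfolding W_def by simp
  have F0: "0 \<le> F" using F P u by (meson mult_nonneg_nonneg order_trans zero_le_power2 add_nonneg_nonneg)
  have "2*c*X = 2*c*(a^2+b^2) + 2*(1+c^2)*(a*b)"
    unfolding X_def a_def b_def by (simp add: power2_eq_square algebra_simps)
  moreover have "(1+c^2) * (-(a^2+b^2)) \<le> 2*(1+c^2)*(a*b)"
  proof -
    have "-(a^2+b^2) \<le> 2*(a*b)" using zero_le_power2[of "a+b"] by (simp add: power2_eq_square algebra_simps)
    from mult_left_mono[OF this, of "1+c^2"] show ?thesis by (simp add: algebra_simps)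
  qed
  ultimately have cX: "-((1-c)^2*(a^2+b^2)) \<le> 2*c*X"
    by (simp add: power2_eq_square algebra_simps)
  have ab: "a^2 + b^2 \<le> u * W"
  proof -
    have "c^2*d1^2*x1^2 \<le> c^2*d1^2*u" "d2^2*x2^2 \<le> d2^2*u" using u by (intro mult_left_mono; simp)+
    then show ?thesis unfolding W_def a_def b_def by (simp add: power_mult_distrib algebra_simps)
  qed
  have "P*((1-c)^2*(a^2+b^2)) \<le> (1-c)^2*((u*P)*W)"
    using mult_left_mono[OF mult_left_mono[OF ab, of "(1-c)^2"] P] by (simp add: algebra_simps)
  also have "\<dots> \<le> (1-c)^2*(F*W)"
    using F W0 by (intro mult_left_mono mult_right_mono) auto
  also have "\<dots> \<le> c*(F*W)"
    using c F0 W0 by (intro mult_right_mono) (auto simp: power2_eq_square algebra_simps)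
  finally have "0 \<le> c * (W*F + 2*X*P)"
    using mult_left_mono[OF cX P] by (simp add: algebra_simps)
  then have "0 \<le> W*F + 2*X*P" using c by (simp add: zero_le_mult_iff)
  then show ?thesis unfolding W_def X_def by (simp add: power2_eq_square algebra_simps)
qed

lemma euclidean_rate_bound:
  fixes F P u x1 x2 d1 d2 :: real
  assumes F1: "F \<le> 1" and P: "0 \<le> P" and F: "u*P \<le> F" and u: "u = x1^2 + x2^2"
  shows "\<bar>(d1*d1 - d2*d2) * F + 2*(d1*x1 - d2*x2)*(x1*d1 + x2*d2) * P\<bar> \<le> 3*(d1^2+d2^2)"
proof -
  have F0: "0 \<le> F" using F P u by (meson mult_nonneg_nonneg order_trans zero_le_power2 add_nonneg_nonneg)
  have "\<bar>(d1*d1 - d2*d2) * F\<bar> \<le> \<bar>d1*d1 - d2*d2\<bar> * 1"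
    using F0 mult_left_le[OF F1 abs_ge_zero] by (simp add: abs_mult)
  also have "\<dots> \<le> d1^2+d2^2" by (simp add: power2_eq_square abs_le_iff)
  finally have first: "\<bar>(d1*d1 - d2*d2) * F\<bar> \<le> d1^2+d2^2" .
  have "\<bar>d1^2*x1^2 - d2^2*x2^2\<bar> \<le> u*(d1^2+d2^2)"
  proof -
    have "d1^2*x1^2 \<le> d1^2*u" "d2^2*x2^2 \<le> d2^2*u" using u by (intro mult_left_mono; simp)+
    moreover have "0 \<le> d1^2*x1^2" "0 \<le> d2^2*x2^2" by simp_all
    ultimately show ?thesis unfolding abs_le_iff distrib_left by (simp only: mult.commute) linarith
  qed
  then have "2*\<bar>d1^2*x1^2 - d2^2*x2^2\<bar>*P \<le> 2*(u*(d1^2+d2^2))*P"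
    using P by (intro mult_right_mono) auto
  then have "\<bar>2*(d1^2*x1^2 - d2^2*x2^2)*P\<bar> \<le> 2*(d1^2+d2^2)*(u*P)"
    using P by (simp only: abs_mult abs_of_nonneg) (simp add: algebra_simps)
  also have "\<dots> \<le> 2*(d1^2+d2^2)" using F F1 mult_left_mono[of "u*P" 1 "2*(d1^2+d2^2)"] by simp
  finally have second: "\<bar>2*(d1*x1 - d2*x2)*(x1*d1 + x2*d2) * P\<bar> \<le> 2*(d1^2+d2^2)"
    by (simp add: power2_eq_square algebra_simps)
  show ?thesis using first second abs_triangle_ineq by (smt (verit))
qed

lemma line_hits_zero_at_most_once:
  fixes z d :: "'a::real_vector"
  assumes "d \<noteq> 0"
  obtains \<theta>0 where "\<And>\<theta>. z + \<theta> *\<^sub>R d = 0 \<Longrightarrow> \<theta> = \<theta>0"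
proof (cases "\<exists>\<theta>. z + \<theta> *\<^sub>R d = 0")
  case True
  then obtain \<theta>0 where \<theta>0: "z + \<theta>0 *\<^sub>R d = 0" by blast
  have "\<theta> = \<theta>0" if "z + \<theta> *\<^sub>R d = 0" for \<theta>
  proof -
    have "(\<theta> - \<theta>0) *\<^sub>R d = (z + \<theta> *\<^sub>R d) - (z + \<theta>0 *\<^sub>R d)" by (simp add: algebra_simps)
    then show ?thesis using that \<theta>0 assms by simp
  qed
  then show ?thesis by (rule that)
qed blast

lemma has_vector_derivative_fst:
  "(y has_vector_derivative v) F \<Longrightarrow> ((\<lambda>t. fst (y t)) has_real_derivative fst v) F"
  unfolding has_vector_derivative_def has_field_derivative_def
  by (drule has_derivative_fst) (simp add: mult_commute_abs)

lemma has_vector_derivative_snd: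
  "(y has_vector_derivative v) F \<Longrightarrow> ((\<lambda>t. snd (y t)) has_real_derivative snd v) F"
  unfolding has_vector_derivative_def has_field_derivative_def
  by (drule has_derivative_snd) (simp add: mult_commute_abs)

section \<open>The flow near the fixed point\<close>

lemma lam_gt_1: "1 < lam"
  unfolding lam_def by (simp add: add_pos_nonneg)

lemma ln_lam_gt_0: "0 < ln lam"
  using lam_gt_1 by simp

definition flow_line :: "(real \<Rightarrow> real) \<Rightarrow> real \<times> real \<Rightarrow> (real \<Rightarrow> real \<times> real) \<Rightarrow> bool" where
  "flow_line psi s y \<longleftrightarrow> y 0 = s \<and> (\<forall>t. (y has_vector_derivative vfield psi (y t)) (at t))"

definition cone_form :: "real \<Rightarrow> real \<times> real \<Rightarrow> real" where
  "cone_form c w = c^2 * (fst w)^2 - (snd w)^2"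

lemma cone_form_scaleR: "cone_form c (r *\<^sub>R w) = r^2 * cone_form c w"
  unfolding cone_form_def by (simp add: power_mult_distrib algebra_simps)

lemma cone_form_le_derivative:
  fixes F L :: "real \<times> real \<Rightarrow> real \<times> real"
  assumes L: "(F has_derivative L) (at x)"
    and growth: "\<And>h. h^2 * cone_form c v \<le> cone_form c (F (x + h *\<^sub>R v) - F x)"
  shows "cone_form c v \<le> cone_form c (L v)"
proof -
  have "((\<lambda>h. x + h *\<^sub>R v) has_derivative (\<lambda>h. h *\<^sub>R v)) (at 0)"
    by (auto intro!: derivative_eq_intros)
  then have "((\<lambda>h. F (x + h *\<^sub>R v)) has_derivative (\<lambda>h. L (h *\<^sub>R v))) (at 0)"
    using diff_chain_at[of "\<lambda>h. x + h *\<^sub>R v" _ 0 F L] L by (simp add: o_def)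
  then have "((\<lambda>h. F (x + h *\<^sub>R v)) has_vector_derivative L v) (at 0)"
    using linear_cmul[OF has_derivative_linear[OF L]] by (simp add: has_vector_derivative_def)
  then have "((\<lambda>h. fst (F (x + h *\<^sub>R v))) has_real_derivative fst (L v)) (at 0)"
    and "((\<lambda>h. snd (F (x + h *\<^sub>R v))) has_real_derivative snd (L v)) (at 0)"
    by (rule has_vector_derivative_fst has_vector_derivative_snd)+
  then have "((\<lambda>h. (fst (F (x + h *\<^sub>R v)) - fst (F x)) / h) \<longlongrightarrow> fst (L v)) (at 0)"
    and "((\<lambda>h. (snd (F (x + h *\<^sub>R v)) - snd (F x)) / h) \<longlongrightarrow> snd (L v)) (at 0)"
    by (simp_all add: has_field_derivative_iff)
  then have "((\<lambda>h. cone_form c ((1 / h) *\<^sub>R (F (x + h *\<^sub>R v) - F x))) \<longlongrightarrow> cone_form c (L v)) (at 0)"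
    unfolding cone_form_def by (auto intro!: tendsto_intros simp: diff_divide_distrib)
  moreover have "\<forall>\<^sub>F h in at 0. cone_form c v \<le> cone_form c ((1 / h) *\<^sub>R (F (x + h *\<^sub>R v) - F x))"
    unfolding eventually_at_filter cone_form_scaleR
    using growth by (auto intro!: always_eventually simp: power_one_over le_divide_eq mult.commute)
  ultimately show ?thesis by (rule tendsto_lowerbound) simp
qed

locale flow_profile =
  fixes psi :: "real \<Rightarrow> real" and D :: "real \<Rightarrow> real"
  assumes bounds: "\<And>u. 0 \<le> u \<Longrightarrow> 0 \<le> psi_ext psi u \<and> psi_ext psi u \<le> 1"
    and has_deriv: "\<And>u. 0 < u \<Longrightarrow> (psi_ext psi has_real_derivative D u) (at u)"
    and deriv_nonneg: "\<And>u. 0 < u \<Longrightarrow> 0 \<le> D u"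
    and mult_deriv_le: "\<And>u. 0 < u \<Longrightarrow> u * D u \<le> psi_ext psi u"
    and pos: "\<And>u. 0 < u \<Longrightarrow> 0 < psi_ext psi u"
begin

abbreviation "\<phi> \<equiv> psi_ext psi"

lemma isCont_linear_mult_profile:
  "isCont (\<lambda>x::real \<times> real. (p * fst x + q * snd x) * \<phi> ((fst x)^2 + (snd x)^2)) x"
proof (cases "x = 0")
  case False
  then have "isCont \<phi> ((fst x)^2 + (snd x)^2)"
    by (intro DERIV_isCont[OF has_deriv]) (simp add: sum_power2_gt_zero_iff prod_eq_iff)
  moreover have "isCont (\<lambda>x::real \<times> real. (fst x)^2 + (snd x)^2) x" by (intro continuous_intros)
  ultimately have "isCont (\<lambda>x::real \<times> real. \<phi> ((fst x)^2 + (snd x)^2)) x" by (rule isCont_o2[rotated])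
  moreover have "isCont (\<lambda>x::real \<times> real. p * fst x + q * snd x) x" by (intro continuous_intros)
  ultimately show ?thesis by (rule continuous_mult[rotated])
next
  case True
  \<comment> \<open>at the origin only the boundedness of \<open>\<phi>\<close> is available\<close>
  have "((\<lambda>y::real \<times> real. \<bar>p * fst y + q * snd y\<bar>) \<longlongrightarrow> \<bar>p * fst x + q * snd x\<bar>) (at x)"
    by (intro tendsto_intros)
  then have lim: "((\<lambda>y::real \<times> real. \<bar>p * fst y + q * snd y\<bar>) \<longlongrightarrow> 0) (at x)"
    using True by simp
  have bound: "norm ((p * fst y + q * snd y) * \<phi> ((fst y)^2 + (snd y)^2)) \<le> \<bar>p * fst y + q * snd y\<bar>"
    for y :: "real \<times> real"
  proof -
    have "\<bar>\<phi> ((fst y)^2 + (snd y)^2)\<bar> \<le> 1" using bounds[of "(fst y)^2 + (snd y)^2"] by simp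
    then show ?thesis unfolding real_norm_def abs_mult by (rule mult_left_le) simp
  qed
  have "((\<lambda>y::real \<times> real. (p * fst y + q * snd y) * \<phi> ((fst y)^2 + (snd y)^2)) \<longlongrightarrow> 0) (at x)"
    by (rule Lim_null_comparison[OF always_eventually lim]) (use bound in blast)
  then show ?thesis using True by (simp add: isCont_def)
qed

text \<open>The function \<open>x \<mapsto> (p x\<^sub>1 + q x\<^sub>2) \<phi>(|x|\<^sup>2)\<close> is differentiable off the origin, which a line
  meets at most once; a lower bound on its directional derivative therefore bounds its increment
  along the segment from \<open>z\<close> to \<open>z + d\<close>.\<close>
lemma segment_increment_ge:
  fixes z1 z2 d1 d2 p q K :: real
  assumes H: "\<And>x1 x2. (x1, x2) \<noteq> (0,0) \<Longrightarrow> K \<le> (p*d1+q*d2) * \<phi>(x1^2+x2^2)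
       + 2*(p*x1+q*x2)*(x1*d1+x2*d2) * D (x1^2+x2^2)"
  shows "K \<le> (p*(z1+d1)+q*(z2+d2)) * \<phi>((z1+d1)^2+(z2+d2)^2) - (p*z1+q*z2)*\<phi>(z1^2+z2^2)"
proof (cases "(d1, d2) = 0")
  case True
  then show ?thesis using H[of 1 0] by (simp add: zero_prod_def)
next
  case False
  define u where "u \<theta> = (z1+\<theta>*d1)^2+(z2+\<theta>*d2)^2" for \<theta>
  define h where "h \<theta> = (p*(z1+\<theta>*d1)+q*(z2+\<theta>*d2)) * \<phi> (u \<theta>)" for \<theta>
  have h_deriv: "(h has_real_derivative (p*d1+q*d2) * \<phi> (u \<theta>)
       + 2*(p*(z1+\<theta>*d1)+q*(z2+\<theta>*d2))*((z1+\<theta>*d1)*d1+(z2+\<theta>*d2)*d2) * D (u \<theta>)) (at \<theta>)"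
    if "(z1+\<theta>*d1, z2+\<theta>*d2) \<noteq> (0,0)" for \<theta>
  proof -
    have "0 < u \<theta>" using that unfolding u_def by (simp add: sum_power2_gt_zero_iff)
    moreover have "(u has_real_derivative 2*(z1+\<theta>*d1)*d1 + 2*(z2+\<theta>*d2)*d2) (at \<theta>)"
      unfolding u_def by (auto intro!: derivative_eq_intros simp: algebra_simps)
    ultimately have "((\<lambda>t. \<phi> (u t)) has_real_derivative D (u \<theta>) * (2*(z1+\<theta>*d1)*d1 + 2*(z2+\<theta>*d2)*d2)) (at \<theta>)"
      by (rule DERIV_chain2[OF has_deriv])
    moreover have "((\<lambda>t. p*(z1+t*d1)+q*(z2+t*d2)) has_real_derivative p*d1+q*d2) (at \<theta>)"
      by (auto intro!: derivative_eq_intros)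
    ultimately show ?thesis
      unfolding h_def using DERIV_mult by (fastforce simp: algebra_simps)
  qed
  obtain \<theta>0 where \<theta>0: "\<And>\<theta>. (z1, z2) + \<theta> *\<^sub>R (d1, d2) = 0 \<Longrightarrow> \<theta> = \<theta>0"
    using line_hits_zero_at_most_once[OF False] by blast
  have h_cont: "isCont h \<theta>" for \<theta>
  proof -
    have "isCont (\<lambda>\<theta>. (z1+\<theta>*d1, z2+\<theta>*d2)) \<theta>" by (intro continuous_intros)
    from isCont_o2[OF this isCont_linear_mult_profile] show ?thesis by (simp add: h_def[abs_def] u_def)
  qed
  have "h 0 - K * 0 \<le> h 1 - K * 1"
  proof (rule DERIV_nonneg_imp_le_except_point[where f = "\<lambda>\<theta>. h \<theta> - K * \<theta>" and c = \<theta>0])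
    have "continuous_on {0..1} h"
      by (intro continuous_at_imp_continuous_on ballI h_cont)
    then show "continuous_on {0..1} (\<lambda>\<theta>. h \<theta> - K * \<theta>)"
      by (intro continuous_intros)
  next
    fix x :: real assume "x \<noteq> \<theta>0"
    then have nz: "(z1+x*d1, z2+x*d2) \<noteq> (0,0)" using \<theta>0[of x] by (auto simp: zero_prod_def)
    have "((\<lambda>\<theta>. h \<theta> - K * \<theta>) has_real_derivative
        (p*d1+q*d2) * \<phi> (u x) + 2*(p*(z1+x*d1)+q*(z2+x*d2))*((z1+x*d1)*d1+(z2+x*d2)*d2) * D (u x) - K) (at x)"
      using DERIV_diff[OF h_deriv[OF nz] DERIV_cmult_Id[of K]] by simp
    moreover have "K \<le> (p*d1+q*d2) * \<phi> (u x) + 2*(p*(z1+x*d1)+q*(z2+x*d2))*((z1+x*d1)*d1+(z2+x*d2)*d2) * D (u x)"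
      using H[OF nz] unfolding u_def by simp
    ultimately show "\<exists>y. DERIV (\<lambda>\<theta>. h \<theta> - K * \<theta>) x :> y \<and> 0 \<le> y" by force
  qed simp
  then show ?thesis unfolding h_def u_def by simp
qed

lemma flow_line_components:
  assumes "flow_line psi s y"
  shows "((\<lambda>t. fst (y t)) has_real_derivative fst (y t) * \<phi>((fst (y t))^2 + (snd (y t))^2) * ln lam) (at t)"
    and "((\<lambda>t. snd (y t)) has_real_derivative - snd (y t) * \<phi>((fst (y t))^2 + (snd (y t))^2) * ln lam) (at t)"
  using assms has_vector_derivative_fst[of y "vfield psi (y t)" "at t"]
    has_vector_derivative_snd[of y "vfield psi (y t)" "at t"]
  by (auto simp: flow_line_def vfield_def)

text \<open>For \<open>w = y - z\<close>, the rate of \<open>a w\<^sub>1\<^sup>2 + b w\<^sub>2\<^sup>2\<close> is \<open>2 log \<lambda>\<close> times the increment of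
  \<open>(p x\<^sub>1 + q x\<^sub>2) \<phi>(|x|\<^sup>2)\<close> from \<open>z\<close> to \<open>y\<close>, where \<open>(p, q) = (a w\<^sub>1, -b w\<^sub>2)\<close>.\<close>
lemma quadratic_form_rate_ge:
  fixes a b :: real and K :: "real \<Rightarrow> real \<Rightarrow> real"
  assumes y: "flow_line psi s y" and z: "flow_line psi s' z"
    and H: "\<And>x1 x2 d1 d2. (x1, x2) \<noteq> (0,0) \<Longrightarrow> K d1 d2 \<le> (a*d1*d1 - b*d2*d2) * \<phi>(x1^2+x2^2)
       + 2*(a*d1*x1 - b*d2*x2)*(x1*d1+x2*d2) * D (x1^2+x2^2)"
  shows "\<exists>N'. ((\<lambda>t. a * (fst (y t) - fst (z t))^2 + b * (snd (y t) - snd (z t))^2)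
      has_real_derivative N') (at t) \<and>
    2 * ln lam * K (fst (y t) - fst (z t)) (snd (y t) - snd (z t)) \<le> N'"
proof -
  define y1 y2 z1 z2 where "y1 = fst (y t)" and "y2 = snd (y t)" and "z1 = fst (z t)" and "z2 = snd (z t)"
  define d1 d2 where "d1 = y1 - z1" and "d2 = y2 - z2"
  have "((\<lambda>t. a * (fst (y t) - fst (z t))^2 + b * (snd (y t) - snd (z t))^2) has_real_derivative
      2 * ln lam * ((a*d1*(z1+d1) + (-b*d2)*(z2+d2)) * \<phi>((z1+d1)^2+(z2+d2)^2)
        - (a*d1*z1 + (-b*d2)*z2) * \<phi>(z1^2+z2^2))) (at t)"
    unfolding y1_def y2_def z1_def z2_def d1_def d2_def
    by (auto intro!: derivative_eq_intros flow_line_components[OF y] flow_line_components[OF z]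
        simp: algebra_simps)
  moreover have "K d1 d2 \<le> (a*d1*(z1+d1) + (-b*d2)*(z2+d2)) * \<phi>((z1+d1)^2+(z2+d2)^2)
        - (a*d1*z1 + (-b*d2)*z2) * \<phi>(z1^2+z2^2)"
  proof (rule segment_increment_ge)
    fix x1 x2 :: real assume "(x1, x2) \<noteq> (0, 0)"
    from H[OF this, of d1 d2] show "K d1 d2 \<le> (a*d1*d1 + -b*d2*d2) * \<phi>(x1^2+x2^2)
       + 2*(a*d1*x1 + -b*d2*x2)*(x1*d1+x2*d2) * D (x1^2+x2^2)"
      by simp
  qed
  ultimately show ?thesis
    using ln_lam_gt_0 unfolding d1_def d2_def y1_def y2_def z1_def z2_def by force
qed

lemma cone_form_mono_along_flow_lines:
  assumes c: "0 < c" "1 + c^2 \<le> 3*c" and y: "flow_line psi s y" and z: "flow_line psi s' z"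
  shows "cone_form c (y 0 - z 0) \<le> cone_form c (y 1 - z 1)"
proof -
  have "c^2 * (fst (y 0) - fst (z 0))^2 + (-1) * (snd (y 0) - snd (z 0))^2
      \<le> c^2 * (fst (y 1) - fst (z 1))^2 + (-1) * (snd (y 1) - snd (z 1))^2"
  proof (rule DERIV_nonneg_imp_nondecreasing[of 0 1])
    fix t
    show "\<exists>N'. ((\<lambda>t. c^2 * (fst (y t) - fst (z t))^2 + (-1) * (snd (y t) - snd (z t))^2)
        has_real_derivative N') (at t) \<and> 0 \<le> N'"
      using quadratic_form_rate_ge[OF y z, of "\<lambda>_ _. 0" "c^2" "-1" t]
        cone_form_rate_nonneg[OF c deriv_nonneg mult_deriv_le refl]
      by (simp add: sum_power2_gt_zero_iff)
  qed simp
  then show ?thesis unfolding cone_form_def by simp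
qed

lemma flow_line_unique:
  assumes y: "flow_line psi s y" and z: "flow_line psi s z"
  shows "y = z"
proof -
  define N where "N t = (fst (y t) - fst (z t))^2 + (snd (y t) - snd (z t))^2" for t
  have "\<exists>N'. (N has_real_derivative N') (at t) \<and> \<bar>N'\<bar> \<le> 6 * ln lam * N t" for t
  proof -
    have H: "- (3*(d1^2+d2^2)) \<le> (a*d1*d1 - a*d2*d2) * \<phi>(x1^2+x2^2)
        + 2*(a*d1*x1 - a*d2*x2)*(x1*d1+x2*d2) * D (x1^2+x2^2)"
      if "(x1, x2) \<noteq> (0,0)" "a = 1 \<or> a = -1" for x1 x2 d1 d2 a :: real
    proof -
      have "0 < x1^2+x2^2" using that(1) by (simp add: sum_power2_gt_zero_iff)
      from euclidean_rate_bound[OF conjunct2[OF bounds] deriv_nonneg[OF this] mult_deriv_le[OF this] refl]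
      show ?thesis using that(2) by (auto simp: abs_le_iff algebra_simps)
    qed
    have N_alt: "N = (\<lambda>t. 1 * (fst (y t) - fst (z t))^2 + 1 * (snd (y t) - snd (z t))^2)"
      and minus_N_alt: "(\<lambda>t. - N t) = (\<lambda>t. (-1) * (fst (y t) - fst (z t))^2 + (-1) * (snd (y t) - snd (z t))^2)"
      unfolding N_def by auto
    have N_at: "N t = (fst (y t) - fst (z t))^2 + (snd (y t) - snd (z t))^2" by (simp add: N_def)
    have "\<exists>N'. (N has_real_derivative N') (at t) \<and>
        2 * ln lam * - (3*((fst (y t) - fst (z t))^2 + (snd (y t) - snd (z t))^2)) \<le> N'"
      unfolding N_alt by (rule quadratic_form_rate_ge[OF y z]) (rule H; simp)
    then obtain N1 where N1: "(N has_real_derivative N1) (at t)" "- (6 * ln lam * N t) \<le> N1"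
      unfolding N_at by (auto simp: algebra_simps)
    have "\<exists>N'. ((\<lambda>t. - N t) has_real_derivative N') (at t) \<and>
        2 * ln lam * - (3*((fst (y t) - fst (z t))^2 + (snd (y t) - snd (z t))^2)) \<le> N'"
      unfolding minus_N_alt by (rule quadratic_form_rate_ge[OF y z]) (rule H; simp)
    then obtain N2 where N2: "((\<lambda>t. - N t) has_real_derivative N2) (at t)" "- (6 * ln lam * N t) \<le> N2"
      unfolding N_at by (auto simp: algebra_simps)
    have "N2 = - N1" using DERIV_unique[OF N2(1) DERIV_minus[OF N1(1)]] .
    then show ?thesis using N1 N2 by (intro exI[of _ N1]) auto
  qed
  moreover have "N 0 = 0" using y z unfolding N_def flow_line_def by simp
  ultimately have "N t = 0" for t
    by (rule DERIV_abs_le_mult_imp_eq_0) (simp add: N_def)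
  then show ?thesis
    unfolding N_def by (auto simp: fun_eq_iff prod_eq_iff sum_power2_eq_zero_iff)
qed

lemma flow_line_exists: "\<exists>y. flow_line psi s y"
proof (cases "s = 0")
  case True
  have "vfield psi 0 = 0" by (simp add: vfield_def zero_prod_def)
  then have "flow_line psi s (\<lambda>t. 0)" using True by (simp add: flow_line_def)
  then show ?thesis by blast
next
  case False
  obtain a b where s: "s = (a, b)" by force
  define w where "w \<sigma> = (a * exp \<sigma>)^2 + (b * exp (- \<sigma>))^2" for \<sigma>
  have w_pos: "0 < w \<sigma>" for \<sigma>
    using False s unfolding w_def by (auto simp: sum_power2_gt_zero_iff zero_prod_def)
  \<comment> \<open>flow lines run along the hyperbolas \<open>s\<^sub>1 s\<^sub>2 = a b\<close>; only the speed has to be found\<close>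
  obtain \<tau> where \<tau>: "\<tau> 0 = 0" "\<And>t. (\<tau> has_real_derivative ln lam * \<phi> (w (\<tau> t))) (at t)"
  proof (rule autonomous_ode_solution_exists)
    fix \<sigma>
    have "isCont w \<sigma>" unfolding w_def by (intro continuous_intros)
    then have "isCont (\<lambda>\<sigma>. \<phi> (w \<sigma>)) \<sigma>"
      by (rule isCont_o2) (rule DERIV_isCont[OF has_deriv[OF w_pos]])
    then show "isCont (\<lambda>\<sigma>. ln lam * \<phi> (w \<sigma>)) \<sigma>"
      by (intro continuous_intros)
    show "0 < ln lam * \<phi> (w \<sigma>)" using ln_lam_gt_0 pos[OF w_pos] by simp
    show "ln lam * \<phi> (w \<sigma>) \<le> ln lam" using ln_lam_gt_0 bounds[of "w \<sigma>"] w_pos[of \<sigma>] by simp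
  qed blast
  define y where "y t = (a * exp (\<tau> t), b * exp (- \<tau> t))" for t
  have "(y has_vector_derivative vfield psi (y t)) (at t)" for t
  proof -
    have "((\<lambda>t. a * exp (\<tau> t)) has_real_derivative a * (exp (\<tau> t) * (ln lam * \<phi> (w (\<tau> t))))) (at t)"
      by (rule DERIV_cmult[OF DERIV_chain2[OF DERIV_exp \<tau>(2)]])
    moreover have "((\<lambda>t. b * exp (- \<tau> t)) has_real_derivative b * (exp (- \<tau> t) * - (ln lam * \<phi> (w (\<tau> t))))) (at t)"
      by (rule DERIV_cmult[OF DERIV_chain2[OF DERIV_exp DERIV_minus[OF \<tau>(2)]]])
    ultimately have "(y has_vector_derivative (a * (exp (\<tau> t) * (ln lam * \<phi> (w (\<tau> t)))),
        b * (exp (- \<tau> t) * - (ln lam * \<phi> (w (\<tau> t)))))) (at t)"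
      unfolding y_def by (intro has_vector_derivative_Pair) (simp_all add: has_real_derivative_iff_has_vector_derivative)
    moreover have "vfield psi (y t) = (a * (exp (\<tau> t) * (ln lam * \<phi> (w (\<tau> t)))),
        b * (exp (- \<tau> t) * - (ln lam * \<phi> (w (\<tau> t)))))"
      by (simp add: vfield_def y_def w_def)
    ultimately show ?thesis by simp
  qed
  moreover have "y 0 = s" using \<tau>(1) s by (simp add: y_def)
  ultimately show ?thesis unfolding flow_line_def by blast
qed

lemma flow1_eq:
  assumes "flow_line psi s y"
  shows "flow1 psi s = y 1"
proof -
  have "(THE y. flow_line psi s y) = y"
    using assms flow_line_unique by (blast intro: the_equality)
  then show ?thesis unfolding flow1_def flow_line_def by simp
qed

lemma cone_form_le_deriv_flow1:
  assumes c: "0 < c" "1 + c^2 \<le> 3*c" and L: "(flow1 psi has_derivative L) (at x)"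
  shows "cone_form c v \<le> cone_form c (L v)"
proof (rule cone_form_le_derivative[OF L])
  fix h :: real
  obtain y z where y: "flow_line psi (x + h *\<^sub>R v) y" and z: "flow_line psi x z"
    using flow_line_exists by blast
  have "h^2 * cone_form c v = cone_form c (y 0 - z 0)"
    using y z by (simp add: flow_line_def cone_form_scaleR)
  also have "\<dots> \<le> cone_form c (y 1 - z 1)" by (rule cone_form_mono_along_flow_lines[OF c y z])
  finally show "h^2 * cone_form c v \<le> cone_form c (flow1 psi (x + h *\<^sub>R v) - flow1 psi x)"
    by (simp add: flow1_eq[OF y] flow1_eq[OF z])
qed

end

section \<open>Invariance of the cones\<close>

lemma Aeig_cone_form_mono: "cone_form c v \<le> cone_form c (Aeig v)"
proof -
  have lam2: "1 \<le> lam^2" using lam_gt_1 by simp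
  then have "(fst v)^2 * 1 \<le> (fst v)^2 * lam^2" and "(snd v)^2 * 1 \<le> (snd v)^2 * lam^2"
    by (intro mult_left_mono; simp)+
  then have "(fst v)^2 \<le> lam^2 * (fst v)^2" and "(snd v)^2 / lam^2 \<le> (snd v)^2"
    using lam_gt_1 by (simp_all add: divide_le_eq mult.commute)
  then have "c^2 * (fst v)^2 \<le> c^2 * (lam * fst v)^2" and "(snd v / lam)^2 \<le> (snd v)^2"
    by (simp_all add: mult_left_mono power_mult_distrib power_divide)
  then show ?thesis unfolding cone_form_def Aeig_def by simp
qed

lemma Kplus_iff_cone_form_pos:
  assumes "0 < \<mu>"
  shows "v \<in> Kplus \<mu> \<longleftrightarrow> 0 < cone_form \<mu> v"
proof -
  have "v \<in> Kplus \<mu> \<longleftrightarrow> \<not> \<bar>\<mu> * fst v\<bar> \<le> \<bar>snd v\<bar>"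
    using assms by (auto simp: Kplus_def abs_mult)
  also have "\<dots> \<longleftrightarrow> (snd v)^2 < (\<mu> * fst v)^2"
    by (simp only: abs_le_square_iff not_le)
  finally show ?thesis by (simp add: cone_form_def power_mult_distrib)
qed

lemma not_in_Kminus_iff_cone_form_nonneg:
  assumes "0 < \<mu>"
  shows "w \<notin> Kminus \<mu> \<longleftrightarrow> 0 \<le> cone_form (1/\<mu>) w"
proof -
  have "w \<notin> Kminus \<mu> \<longleftrightarrow> \<bar>\<mu> * snd w\<bar> \<le> \<bar>fst w\<bar>"
    using assms by (auto simp: Kminus_def abs_mult)
  also have "\<dots> \<longleftrightarrow> (\<mu> * snd w)^2 \<le> (fst w)^2"
    by (simp only: abs_le_square_iff)
  also have "\<dots> \<longleftrightarrow> (snd w)^2 \<le> (fst w / \<mu>)^2"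
    using assms by (simp add: power_mult_distrib power_divide field_simps)
  finally show ?thesis by (simp add: cone_form_def power_divide)
qed

lemma cone_condition_mu_and_inverse:
  fixes \<mu> :: real
  assumes "1/2 < \<mu>" "\<mu> < 1"
  shows "1 + \<mu>^2 \<le> 3*\<mu>" and "1 + (1/\<mu>)^2 \<le> 3*(1/\<mu>)"
proof -
  have "1/2 * 2 \<le> \<mu> * (3 - \<mu>)" using assms by (intro mult_mono) auto
  then show mu: "1 + \<mu>^2 \<le> 3*\<mu>" by (simp add: power2_eq_square algebra_simps)
  have "(1 + (1/\<mu>)^2) * \<mu>^2 = 1 + \<mu>^2" using assms by (simp add: power2_eq_square field_simps)
  also have "\<dots> \<le> 3*\<mu>" by (rule mu)
  also have "\<dots> = 3*(1/\<mu>) * \<mu>^2" using assms by (simp add: power2_eq_square field_simps)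
  finally show "1 + (1/\<mu>)^2 \<le> 3*(1/\<mu>)" by (rule mult_right_le_imp_le) (use assms in simp)
qed

lemma cones_invariant_if_cone_form_mono:
  fixes \<mu> :: real and L :: "real \<times> real \<Rightarrow> real \<times> real"
  assumes \<mu>: "1/2 < \<mu>" "\<mu> < 1"
    and mono: "\<And>c v. 0 < c \<Longrightarrow> 1 + c^2 \<le> 3*c \<Longrightarrow> cone_form c v \<le> cone_form c (L v)"
  shows "(\<forall>v\<in>Kplus \<mu>. L v \<in> Kplus \<mu>) \<and> (\<forall>w. L w \<in> Kminus \<mu> \<longrightarrow> w \<in> Kminus \<mu>)"
proof -
  have "cone_form \<mu> v \<le> cone_form \<mu> (L v)" "cone_form (1/\<mu>) v \<le> cone_form (1/\<mu>) (L v)" for v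
    using mono cone_condition_mu_and_inverse[OF \<mu>] \<mu> by simp_all
  moreover have "0 < \<mu>" using \<mu> by simp
  ultimately show ?thesis
    using Kplus_iff_cone_form_pos not_in_Kminus_iff_cone_form_nonneg
    by (meson less_le_trans order_trans)
qed

lemma flow_profile_psi:
  fixes r0 :: real and psi :: "real \<Rightarrow> real"
  assumes r0: "0 < r0" "r0 < 1"
    and range: "\<forall>u\<in>{0..1}. psi u \<in> {0..1}"
    and differentiable: "\<forall>u\<in>{0<..<1}. psi differentiable (at u)"
    and one: "\<forall>u\<in>{r0..1}. psi u = 1"
    and deriv_pos: "\<forall>u\<in>{0<..<r0}. deriv psi u > 0"
    and deriv_antimono: "\<forall>u v. 0 < u \<and> u \<le> v \<and> v < r0 \<longrightarrow> deriv psi v \<le> deriv psi u"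
  shows "flow_profile psi (\<lambda>u. if u < 1 then deriv psi u else 0)"
proof -
  have der: "(psi has_real_derivative deriv psi x) (at x)" if "0 < x" "x < 1" for x
    using differentiable that by (simp add: DERIV_deriv_iff_real_differentiable)
  have ext_one: "psi_ext psi u = 1" if "r0 \<le> u" for u
    using one that unfolding psi_ext_def by auto
  \<comment> \<open>at \<open>u = r0\<close> this holds because \<open>psi\<close> attains its maximum \<open>1\<close> there\<close>
  have deriv_zero: "deriv psi u = 0" if "r0 \<le> u" "u < 1" for u
  proof (rule DERIV_local_max[OF der[of u], of "min u (1 - u)"])
    show "\<forall>y. \<bar>u - y\<bar> < min u (1 - u) \<longrightarrow> psi y \<le> psi u"
      using range one that by (auto simp: abs_less_iff)
  qed (use that r0 in auto)
  have mult_deriv_le: "u * deriv psi u \<le> psi u" if "0 < u" "u < r0" for u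
    by (rule mult_deriv_le_of_antimono_deriv[OF that]) (use der deriv_antimono range r0 in auto)
  show ?thesis
  proof unfold_locales
    fix u :: real
    show "0 \<le> u \<Longrightarrow> 0 \<le> psi_ext psi u \<and> psi_ext psi u \<le> 1"
      using range unfolding psi_ext_def by auto
    assume u: "0 < u"
    show "(psi_ext psi has_real_derivative (if u < 1 then deriv psi u else 0)) (at u)"
    proof (cases "u < 1")
      case True
      have "(psi_ext psi has_real_derivative deriv psi u) (at u)"
        by (rule has_field_derivative_transform_within_open[OF der[OF u True], where S="{..<1}"])
           (use True in \<open>auto simp: psi_ext_def\<close>)
      then show ?thesis using True by simp
    next
      case False
      have "(psi_ext psi has_real_derivative 0) (at u)"
        by (rule has_field_derivative_transform_within_open[OF DERIV_const, where S="{r0<..}"])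
           (use False r0 ext_one in auto)
      then show ?thesis using False by simp
    qed
    show "0 \<le> (if u < 1 then deriv psi u else 0)"
      using deriv_pos deriv_zero u by (cases "u < r0") (auto simp: less_imp_le)
    show "u * (if u < 1 then deriv psi u else 0) \<le> psi_ext psi u"
      using mult_deriv_le[OF u] deriv_zero ext_one r0 by (cases "u < r0") (auto simp: psi_ext_def)
    show "0 < psi_ext psi u"
    proof (cases "u < r0")
      case True
      have "0 < u * deriv psi u" using deriv_pos u True by auto
      then show ?thesis using mult_deriv_le[OF u True] r0 True unfolding psi_ext_def by auto
    qed (use ext_one in auto)
  qed
qed

theorem lemma5p4:
  fixes \<alpha> r0 :: real and psi :: "real \<Rightarrow> real"
  assumes "0 < \<alpha>" "\<alpha> < 1" "0 < r0" "r0 < 1"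
    and "\<forall>u\<in>{0..1}. psi u \<in> {0..1}"
    and "\<forall>k. \<forall>u\<in>{0<..<1}. ((deriv ^^ k) psi) differentiable (at u)"
    and "\<forall>u\<in>{r0..1}. psi u = 1"
    and "\<forall>u\<in>{0<..<r0}. deriv psi u > 0"
    and "\<forall>u v. 0 < u \<and> u \<le> v \<and> v < r0 \<longrightarrow> deriv psi v \<le> deriv psi u"
    and "\<forall>u\<in>{0..r0/2}. psi u = (u / r0) powr \<alpha>"
  shows "\<exists>\<mu>0. 0 < \<mu>0 \<and> \<mu>0 < 1 \<and>
           (\<forall>\<mu>. \<mu>0 < \<mu> \<and> \<mu> < 1 \<longrightarrow>
              (\<forall>p L. DG_at psi r0 p L \<longrightarrow>
                 (\<forall>v\<in>Kplus \<mu>. L v \<in> Kplus \<mu>) \<and>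
                 (\<forall>w. L w \<in> Kminus \<mu> \<longrightarrow> w \<in> Kminus \<mu>)))"
proof -
  have "\<forall>u\<in>{0<..<1}. psi differentiable (at u)" using assms(6) by (metis funpow_0)
  then interpret flow_profile psi "\<lambda>u. if u < 1 then deriv psi u else 0"
    by (rule flow_profile_psi[OF assms(3,4,5) _ assms(7-9)])
  have "(\<forall>v\<in>Kplus \<mu>. L v \<in> Kplus \<mu>) \<and> (\<forall>w. L w \<in> Kminus \<mu> \<longrightarrow> w \<in> Kminus \<mu>)"
    if "1/2 < \<mu>" "\<mu> < 1" "DG_at psi r0 p L" for \<mu> p L
  proof (rule cones_invariant_if_cone_form_mono[OF that(1,2)])
    fix c :: real and v assume "0 < c" "1 + c^2 \<le> 3*c"
    from \<open>DG_at psi r0 p L\<close> consider x where "(flow1 psi has_derivative L) (at x)" | "L = Aeig"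
      unfolding DG_at_def by blast
    then show "cone_form c v \<le> cone_form c (L v)"
      by cases (use \<open>0 < c\<close> \<open>1 + c^2 \<le> 3*c\<close> cone_form_le_deriv_flow1 Aeig_cone_form_mono in auto)
  qed
  then show ?thesis by (intro exI[of _ "1/2"]) auto
qed

end
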